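(* Let $A\in\mathbb{R}_+^{n\times n}$ and let $x\in\mathbb{R}_+^n$ be a Perron eigenvector of $A$. Then: (1) if for all $1\le i,j,k\le n$, $x_k<x_j$ implies $a_{i,k}\le a_{i,j}$, then $\rho(A)=\max_{B\in\Omega(A)}\rho(B)$; (2) if for all $1\le i,j,k\le n$, $x_k<x_j$ implies $a_{i,k}\ge a_{i,j}$, then $\rho(A)=\min_{B\in\Omega(A)}\rho(B)$.
   Context: For $A=(a_{i,j})\in\mathbb{R}_+^{n\times n}$ (nonnegative $n\times n$ matrices), $\Omega(A)=\{B\in\mathbb{R}_+^{n\times n}:\ \forall i\ \exists\text{ a permutation }\phi_i\text{ of }\{1,\dots,n\}\text{ with } b_{i,j}=a_{i,\phi_i(j)}\ \forall j\}$. $\rho(B)$ denotes the spectral radius (Perron root) of $B$. A Perron eigenvector of $A$ is a nonzero nonnegative vector $x$ with $Ax=\rho(A)x$. *)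

theory Defs
  imports "Jordan_Normal_Form.Spectral_Radius"
begin

(* n x n real matrices are Jordan_Normal_Form matrices in carrier_mat n n; indices 0..<n *)

definition nonneg_mat :: "real mat \<Rightarrow> bool" where
  "nonneg_mat A \<longleftrightarrow> (\<forall>i<dim_row A. \<forall>j<dim_col A. A $$ (i,j) \<ge> 0)"

definition rho :: "real mat \<Rightarrow> real" where
  "rho B = spectral_radius (map_mat complex_of_real B)"

definition Omega :: "nat \<Rightarrow> real mat \<Rightarrow> real mat set" where
  "Omega n A = {B. B \<in> carrier_mat n n \<and>
     (\<forall>i<n. \<exists>\<phi>. \<phi> permutes {..<n} \<and> (\<forall>j<n. B $$ (i,j) = A $$ (i, \<phi> j)))}"

definition perron_eigenvector :: "nat \<Rightarrow> real mat \<Rightarrow> real vec \<Rightarrow> bool" where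
  "perron_eigenvector n A x \<longleftrightarrow> x \<in> carrier_vec n \<and> x \<noteq> 0\<^sub>v n \<and>
     (\<forall>i<n. x $ i \<ge> 0) \<and> A *\<^sub>v x = rho A \<cdot>\<^sub>v x"

end

theory Submission
  imports Defs
begin

text \<open>If every row of \<open>A\<close> is ordered
  like \<open>x\<close>, the rearrangement inequality gives \<open>(B x)\<^sub>i \<le> (A x)\<^sub>i\<close> for every row-wise permutation
  \<open>B \<in> \<Omega>(A)\<close>, so \<open>B x \<le> \<rho>(A) x\<close>, and the Collatz--Wielandt upper bound yields
  \<open>\<rho>(B) \<le> \<rho>(A)\<close>; for rows ordered oppositely to \<open>x\<close> one gets \<open>\<rho>(A) x \<le> B x\<close> and the
  lower bound \<open>\<rho>(A) \<le> \<rho>(B)\<close>. Since \<open>A \<in> \<Omega>(A)\<close>, \<open>\<rho>(A)\<close> is the maximum, resp. minimum.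
  The upper bound needs \<open>x\<close> only to be nonnegative, at the price of rows of \<open>B\<close> vanishing
  wherever \<open>x\<close> does; under the ordering hypothesis these rows of \<open>A\<close> are indeed zero.\<close>

section \<open>The rearrangement inequality\<close>

lemma similarly_ordered_common_argmax:
  fixes f g :: "'a \<Rightarrow> real"
  assumes "finite A" "A \<noteq> {}"
    and ord: "\<And>j k. j \<in> A \<Longrightarrow> k \<in> A \<Longrightarrow> g k < g j \<Longrightarrow> f k \<le> f j"
  obtains m where "m \<in> A" "\<And>k. k \<in> A \<Longrightarrow> g k \<le> g m \<and> f k \<le> f m"
proof -
  define G where "G = {j \<in> A. g j = Max (g ` A)}"
  have "Max (g ` A) \<in> g ` A"
    using assms(1,2) by simp
  then have "finite G" "G \<noteq> {}"
    using assms(1) unfolding G_def by auto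
  then have "Max (f ` G) \<in> f ` G"
    by simp
  then obtain m where m: "m \<in> G" "f m = Max (f ` G)"
    by auto
  have "g k \<le> g m \<and> f k \<le> f m" if "k \<in> A" for k
  proof (cases "g k < g m")
    case True
    then show ?thesis using ord m(1) that unfolding G_def by force
  next
    case False
    then have "k \<in> G" using m(1) that assms(1) unfolding G_def by (auto intro: antisym)
    then show ?thesis using m \<open>finite G\<close> unfolding G_def by simp
  qed
  then show thesis using m(1) that unfolding G_def by blast
qed

lemma sum_permutes_transpose_le:
  fixes f g :: "'a \<Rightarrow> real"
  assumes "finite I" "m \<in> I" "q \<in> I" "\<phi> q = m"
    and "f (\<phi> m) \<le> f m" "g q \<le> g m"
  shows "(\<Sum>j\<in>I. f (\<phi> j) * g j) \<le> (\<Sum>j\<in>I. f ((\<phi> \<circ> transpose m q) j) * g j)"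
proof (cases "q = m")
  case True
  then show ?thesis by simp
next
  case False
  define \<psi> where "\<psi> = \<phi> \<circ> transpose m q"
  have "(\<Sum>j\<in>I. f (\<phi> j) * g j) - (\<Sum>j\<in>I. f (\<psi> j) * g j) = (\<Sum>j\<in>I. (f (\<phi> j) - f (\<psi> j)) * g j)"
    by (simp add: sum_subtractf left_diff_distrib)
  also have "\<dots> = (\<Sum>j\<in>{m, q}. (f (\<phi> j) - f (\<psi> j)) * g j)"
    using assms(1-3) by (intro sum.mono_neutral_right) (auto simp: \<psi>_def transpose_apply_other)
  also have "\<dots> = (f (\<phi> m) - f m) * (g m - g q)"
    using False assms(4) by (simp add: \<psi>_def algebra_simps)
  also have "\<dots> \<le> 0"
    using assms(5,6) by (simp add: mult_nonpos_nonneg)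
  finally show ?thesis unfolding \<psi>_def by simp
qed

text \<open>Induction on \<open>I\<close>: an element maximising both \<open>f\<close> and \<open>g\<close> can be made a fixed point
  of \<open>\<phi>\<close> by one transposition, which does not decrease the sum.\<close>

theorem rearrangement_inequality:
  fixes f g :: "'a \<Rightarrow> real"
  assumes "finite I" "\<phi> permutes I"
    and "\<And>j k. j \<in> I \<Longrightarrow> k \<in> I \<Longrightarrow> g k < g j \<Longrightarrow> f k \<le> f j"
  shows "(\<Sum>j\<in>I. f (\<phi> j) * g j) \<le> (\<Sum>j\<in>I. f j * g j)"
  using assms
proof (induction I arbitrary: \<phi> rule: finite_remove_induct)
  case empty
  then show ?case by simp
next
  case (remove A \<phi>)
  obtain m where m: "m \<in> A" "\<And>k. k \<in> A \<Longrightarrow> g k \<le> g m \<and> f k \<le> f m"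
    by (rule similarly_ordered_common_argmax[of A g f]) (use remove in auto)
  obtain q where q: "q \<in> A" "\<phi> q = m"
    using m(1) permutes_image[OF remove.prems(1)] by (metis imageE)
  define \<psi> where "\<psi> = \<phi> \<circ> transpose m q"
  have swap: "(\<Sum>j\<in>A. f (\<phi> j) * g j) \<le> (\<Sum>j\<in>A. f (\<psi> j) * g j)"
    unfolding \<psi>_def using m q permutes_in_image[OF remove.prems(1)]
    by (intro sum_permutes_transpose_le remove.hyps(1)) auto
  have "\<psi> permutes A"
    unfolding \<psi>_def using m(1) q(1) by (intro permutes_compose[OF permutes_swap_id remove.prems(1)])
  moreover have "\<psi> m = m"
    unfolding \<psi>_def using q(2) by simp
  ultimately have "\<psi> permutes A - {m}"
    by (auto intro: permutes_superset)
  then have IH: "(\<Sum>j\<in>A - {m}. f (\<psi> j) * g j) \<le> (\<Sum>j\<in>A - {m}. f j * g j)"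
    using remove.IH[OF m(1)] remove.prems(2) by blast
  have "(\<Sum>j\<in>A. f (\<psi> j) * g j) = f m * g m + (\<Sum>j\<in>A - {m}. f (\<psi> j) * g j)"
    using sum.remove[OF remove.hyps(1) m(1), of "\<lambda>j. f (\<psi> j) * g j"] \<open>\<psi> m = m\<close> by simp
  also have "\<dots> \<le> f m * g m + (\<Sum>j\<in>A - {m}. f j * g j)"
    using IH by simp
  also have "\<dots> = (\<Sum>j\<in>A. f j * g j)"
    using sum.remove[OF remove.hyps(1) m(1), of "\<lambda>j. f j * g j"] by simp
  finally show ?case using swap by simp
qed

corollary rearrangement_inequality_opposite:
  fixes f g :: "'a \<Rightarrow> real"
  assumes "finite I" "\<phi> permutes I"
    and "\<And>j k. j \<in> I \<Longrightarrow> k \<in> I \<Longrightarrow> g k < g j \<Longrightarrow> f j \<le> f k"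
  shows "(\<Sum>j\<in>I. f j * g j) \<le> (\<Sum>j\<in>I. f (\<phi> j) * g j)"
  using rearrangement_inequality[of I \<phi> g "\<lambda>j. - f j"] assms by (simp add: sum_negf)

section \<open>Collatz--Wielandt bounds for nonnegative matrices\<close>

lemma obtain_nonzero_index:
  assumes "x \<in> carrier_vec n" "x \<noteq> 0\<^sub>v n"
  obtains j where "j < n" "x $ j \<noteq> 0"
  using assms by (metis carrier_vecD eq_vecI index_zero_vec(1,2))

lemma mult_mat_vec_index_sum:
  assumes "B \<in> carrier_mat n n" "x \<in> carrier_vec n" "i < n"
  shows "(B *\<^sub>v x) $ i = (\<Sum>j<n. B $$ (i,j) * x $ j)"
  using assms by (simp add: scalar_prod_def atLeast0LessThan)

lemma nonneg_mat_mult_vec_mono: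
  assumes "B \<in> carrier_mat n n" "nonneg_mat B" "u \<in> carrier_vec n" "v \<in> carrier_vec n"
    and "\<And>j. j < n \<Longrightarrow> u $ j \<le> v $ j" "i < n"
  shows "(B *\<^sub>v u) $ i \<le> (B *\<^sub>v v) $ i"
  using assms unfolding mult_mat_vec_index_sum[OF assms(1,3,6)] mult_mat_vec_index_sum[OF assms(1,4,6)]
  by (intro sum_mono mult_left_mono) (auto simp: nonneg_mat_def)

lemma pow_mat_Suc_left:
  assumes "B \<in> carrier_mat n n"
  shows "B ^\<^sub>m Suc k = B * B ^\<^sub>m k"
proof (induction k)
  case (Suc k)
  have "B ^\<^sub>m Suc (Suc k) = (B * B ^\<^sub>m k) * B"
    using Suc by simp
  also have "\<dots> = B * B ^\<^sub>m Suc k"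
    using assms by (simp add: assoc_mult_mat[of _ n n _ n])
  finally show ?case .
qed (use assms in simp)

lemma smult_pow_mat:
  fixes A :: "'a::comm_semiring_1 mat"
  assumes "A \<in> carrier_mat n n"
  shows "(c \<cdot>\<^sub>m A) ^\<^sub>m k = c ^ k \<cdot>\<^sub>m A ^\<^sub>m k"
proof (induction k)
  case (Suc k)
  have "(c \<cdot>\<^sub>m A) ^\<^sub>m Suc k = c ^ k \<cdot>\<^sub>m (A ^\<^sub>m k * (c \<cdot>\<^sub>m A))"
    using Suc assms by (simp add: mult_smult_assoc_mat[of _ n n _ n])
  also have "\<dots> = c ^ Suc k \<cdot>\<^sub>m A ^\<^sub>m Suc k"
    using assms by (simp add: mult_smult_distrib[of _ n n _ n]) (auto intro!: eq_matI simp: mult_ac)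
  finally show ?case .
qed (auto intro!: eq_matI)

lemma eigenvalue_smult_mat:
  fixes A :: "'a::comm_ring_1 mat"
  assumes "A \<in> carrier_mat n n" "eigenvalue A k"
  shows "eigenvalue (c \<cdot>\<^sub>m A) (c * k)"
proof -
  obtain v where v: "v \<in> carrier_vec n" "v \<noteq> 0\<^sub>v n" "A *\<^sub>v v = k \<cdot>\<^sub>v v"
    using assms unfolding eigenvalue_def eigenvector_def by auto
  have "(c \<cdot>\<^sub>m A) *\<^sub>v v = (c * k) \<cdot>\<^sub>v v"
  proof (rule eq_vecI)
    fix i assume "i < dim_vec ((c * k) \<cdot>\<^sub>v v)"
    then have i: "i < n" using v by simp
    have "(A *\<^sub>v v) $ i = k * v $ i"
      using v i by simp
    then show "((c \<cdot>\<^sub>m A) *\<^sub>v v) $ i = ((c * k) \<cdot>\<^sub>v v) $ i"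
      using assms(1) v(1) i
      by (simp add: mult_mat_vec_index_sum sum_distrib_left mult.assoc)
  qed (use assms v in simp)
  then show ?thesis
    using v assms unfolding eigenvalue_def eigenvector_def by auto
qed

lemma spectral_radius_nonneg:
  assumes "A \<in> carrier_mat n n" "n > 0"
  shows "spectral_radius A \<ge> 0"
  using spectral_radius_mem_max(1)[OF assms] by auto

text \<open>Rescale to spectral radius below 1, where the Jordan normal form bounds all powers.\<close>

lemma spectral_radius_pow_bound:
  assumes A: "A \<in> carrier_mat n n" and "spectral_radius A < r"
  obtains K where "\<And>k. norm_bound (A ^\<^sub>m k) (K * r ^ k)"
proof (cases "n = 0")
  case True
  then show thesis using A that[of 0] by (auto simp: norm_bound_def)
next
  case False
  then have "r > 0"
    using spectral_radius_nonneg[OF A] assms(2) by fastforce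
  define C where "C = complex_of_real (inverse r) \<cdot>\<^sub>m A"
  have C: "C \<in> carrier_mat n n" "A = complex_of_real r \<cdot>\<^sub>m C"
    using A \<open>r > 0\<close> unfolding C_def by (auto intro!: eq_matI)
  have "spectral_radius C < 1"
  proof -
    obtain \<mu> where \<mu>: "eigenvalue C \<mu>" "spectral_radius C = norm \<mu>"
      using spectral_radius_mem_max(1)[OF C(1)] False unfolding spectrum_def by auto
    have "eigenvalue A (complex_of_real r * \<mu>)"
      using eigenvalue_smult_mat[OF C(1) \<mu>(1)] C(2) by simp
    then have "norm (complex_of_real r * \<mu>) \<le> spectral_radius A"
      using spectral_radius_mem_max(2)[OF A] False unfolding spectrum_def by auto
    then have "r * norm \<mu> \<le> spectral_radius A"
      using \<open>r > 0\<close> by (simp add: norm_mult)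
    then have "r * norm \<mu> < r * 1"
      using assms(2) by simp
    then show ?thesis
      using \<mu>(2) \<open>r > 0\<close> by (simp only: mult_less_cancel_left_pos)
  qed
  then obtain K where K: "\<And>k. norm_bound (C ^\<^sub>m k) K"
    using spectral_radius_jnf_norm_bound_less_1_upper_triangular[OF C(1)] by blast
  have "norm_bound (A ^\<^sub>m k) (K * r ^ k)" for k
    using K[of k] C \<open>r > 0\<close>
    by (auto simp: norm_bound_def smult_pow_mat norm_mult norm_power mult.commute)
  then show thesis by (rule that)
qed

lemma rho_nonneg:
  assumes "B \<in> carrier_mat n n" "n > 0"
  shows "rho B \<ge> 0"
  using spectral_radius_nonneg[of _ n] assms unfolding rho_def by simp

lemma nonneg_mat_pow_mult_vec_ge:
  assumes B: "B \<in> carrier_mat n n" "nonneg_mat B" and x: "x \<in> carrier_vec n" and "0 \<le> r"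
    and sub: "\<And>i. i < n \<Longrightarrow> r * x $ i \<le> (B *\<^sub>v x) $ i" and "i < n"
  shows "r ^ k * x $ i \<le> (B ^\<^sub>m k *\<^sub>v x) $ i"
  using \<open>i < n\<close>
proof (induction k arbitrary: i)
  case 0
  then show ?case using B x by simp
next
  case (Suc k)
  have Bk: "B ^\<^sub>m k *\<^sub>v x \<in> carrier_vec n"
    using pow_carrier_mat[OF B(1)] x by (rule mult_mat_vec_carrier)
  have "r ^ Suc k * x $ i \<le> r ^ k * (B *\<^sub>v x) $ i"
    using mult_left_mono[OF sub[OF Suc.prems], of "r ^ k"] \<open>0 \<le> r\<close> by (simp add: mult_ac)
  also have "\<dots> = (B *\<^sub>v (r ^ k \<cdot>\<^sub>v x)) $ i"
    using B x Suc.prems by (simp add: mult_mat_vec)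
  also have "\<dots> \<le> (B *\<^sub>v (B ^\<^sub>m k *\<^sub>v x)) $ i"
    using Suc B x by (intro nonneg_mat_mult_vec_mono[OF B _ Bk]) auto
  also have "\<dots> = (B ^\<^sub>m Suc k *\<^sub>v x) $ i"
    unfolding pow_mat_Suc_left[OF B(1)] using assoc_mult_mat_vec[OF B(1) pow_carrier_mat[OF B(1)] x] by simp
  finally show ?case .
qed

text \<open>\<open>r x \<le> B x\<close> forces \<open>r\<^sup>k x \<le> B\<^sup>k x\<close>, whereas the entries of \<open>B\<^sup>k\<close> are \<open>O(s\<^sup>k)\<close> for every
  \<open>s > \<rho>(B)\<close>.\<close>

lemma le_rho_of_le_mult_vec:
  assumes B: "B \<in> carrier_mat n n" "nonneg_mat B"
    and x: "x \<in> carrier_vec n" "x \<noteq> 0\<^sub>v n" "\<And>i. i < n \<Longrightarrow> 0 \<le> x $ i"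
    and sub: "\<And>i. i < n \<Longrightarrow> r * x $ i \<le> (B *\<^sub>v x) $ i"
  shows "r \<le> rho B"
proof (rule ccontr)
  assume "\<not> r \<le> rho B"
  obtain j where j: "j < n" "x $ j > 0"
    using obtain_nonzero_index[OF x(1,2)] x(3) by (metis order_le_neq_trans)
  define s where "s = (rho B + r) / 2"
  have s: "0 < s" "rho B < s" "s < r"
    using \<open>\<not> r \<le> rho B\<close> rho_nonneg[OF B(1)] j(1) unfolding s_def by auto
  obtain K where K: "\<And>k. norm_bound (map_mat complex_of_real B ^\<^sub>m k) (K * s ^ k)"
    by (rule spectral_radius_pow_bound[of _ n s]) (use B(1) s(2) in \<open>auto simp: rho_def\<close>)
  have entry: "(B ^\<^sub>m k) $$ (j, l) \<le> K * s ^ k" if "l < n" for k l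
  proof -
    have "norm (complex_of_real ((B ^\<^sub>m k) $$ (j, l))) \<le> K * s ^ k"
      using K[of k] j(1) that B(1)
      unfolding of_real_hom.mat_hom_pow[OF B(1), symmetric] norm_bound_def by auto
    then show ?thesis by simp
  qed
  define X where "X = (\<Sum>l<n. x $ l)"
  have "r ^ k * x $ j \<le> K * s ^ k * X" for k
  proof -
    have "r ^ k * x $ j \<le> (B ^\<^sub>m k *\<^sub>v x) $ j"
      using s by (intro nonneg_mat_pow_mult_vec_ge[OF B x(1) _ sub j(1)]) auto
    also have "\<dots> = (\<Sum>l<n. (B ^\<^sub>m k) $$ (j, l) * x $ l)"
      using pow_carrier_mat[OF B(1)] x(1) j(1) by (rule mult_mat_vec_index_sum)
    also have "\<dots> \<le> (\<Sum>l<n. K * s ^ k * x $ l)"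
      using entry x(3) by (intro sum_mono mult_right_mono) auto
    finally show ?thesis
      unfolding X_def by (simp add: sum_distrib_left)
  qed
  then have bounded: "(r / s) ^ k \<le> K * X / x $ j" for k
    using s(1) j(2) by (simp add: power_divide divide_simps mult_ac)
  obtain k where "K * X / x $ j < (r / s) ^ k"
    using real_arch_pow[of "r / s"] s by auto
  then show False
    using bounded[of k] by simp
qed

lemma ex_rho_subeigenvector:
  assumes B: "B \<in> carrier_mat n n" "nonneg_mat B" and "n > 0"
  obtains w where "w \<in> carrier_vec n" "w \<noteq> 0\<^sub>v n" "\<And>i. i < n \<Longrightarrow> 0 \<le> w $ i"
    "\<And>i. i < n \<Longrightarrow> rho B * w $ i \<le> (B *\<^sub>v w) $ i"
proof -
  define Bc where "Bc = map_mat complex_of_real B"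
  have Bc: "Bc \<in> carrier_mat n n"
    using B(1) unfolding Bc_def by simp
  obtain \<mu> where \<mu>: "eigenvalue Bc \<mu>" "rho B = norm \<mu>"
    using spectral_radius_mem_max(1)[OF Bc \<open>n > 0\<close>] unfolding rho_def Bc_def spectrum_def by auto
  then obtain v where v: "v \<in> carrier_vec n" "v \<noteq> 0\<^sub>v n" "Bc *\<^sub>v v = \<mu> \<cdot>\<^sub>v v"
    using Bc unfolding eigenvalue_def eigenvector_def by auto
  define w where "w = vec n (\<lambda>i. norm (v $ i))"
  have "w \<noteq> 0\<^sub>v n"
    using obtain_nonzero_index[OF v(1,2)] unfolding w_def by (metis index_vec index_zero_vec(1) norm_eq_zero)
  moreover have "rho B * w $ i \<le> (B *\<^sub>v w) $ i" if i: "i < n" for i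
  proof -
    have "rho B * w $ i = norm ((Bc *\<^sub>v v) $ i)"
      using v i \<mu>(2) unfolding w_def by (simp add: norm_mult)
    also have "\<dots> = norm (\<Sum>j<n. complex_of_real (B $$ (i, j)) * v $ j)"
      using mult_mat_vec_index_sum[OF Bc v(1) i] B(1) i unfolding Bc_def by simp
    also have "\<dots> \<le> (\<Sum>j<n. norm (complex_of_real (B $$ (i, j)) * v $ j))"
      by (rule norm_sum)
    also have "\<dots> = (\<Sum>j<n. B $$ (i, j) * w $ j)"
      using B i by (intro sum.cong) (auto simp: nonneg_mat_def norm_mult w_def)
    also have "\<dots> = (B *\<^sub>v w) $ i"
      using mult_mat_vec_index_sum[OF B(1) _ i, of w] unfolding w_def by simp
    finally show ?thesis .
  qed
  ultimately show thesis
    using that[of w] unfolding w_def by auto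
qed

lemma ex_least_dominating_multiple:
  fixes x w :: "real vec"
  assumes x: "x \<in> carrier_vec n" "\<And>i. i < n \<Longrightarrow> 0 \<le> x $ i"
    and w: "w \<in> carrier_vec n" "w \<noteq> 0\<^sub>v n" "\<And>i. i < n \<Longrightarrow> 0 \<le> w $ i"
    and support: "\<And>i. i < n \<Longrightarrow> x $ i = 0 \<Longrightarrow> w $ i = 0"
  obtains c i0 where "0 < c" "i0 < n" "0 < x $ i0" "w $ i0 = c * x $ i0"
    "\<And>i. i < n \<Longrightarrow> w $ i \<le> c * x $ i"
proof -
  define S where "S = {i. i < n \<and> 0 < x $ i}"
  define c where "c = Max ((\<lambda>i. w $ i / x $ i) ` S)"
  obtain j where j: "j < n" "0 < w $ j"
    using obtain_nonzero_index[OF w(1,2)] w(3) by (metis order_le_neq_trans)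
  then have "j \<in> S"
    using support[OF j(1)] x(2)[OF j(1)] unfolding S_def by force
  have "finite S"
    unfolding S_def by simp
  then have c_ge: "w $ i / x $ i \<le> c" if "i \<in> S" for i
    unfolding c_def using that by simp
  have "c \<in> (\<lambda>i. w $ i / x $ i) ` S"
    unfolding c_def using \<open>finite S\<close> \<open>j \<in> S\<close> by (intro Max_in) auto
  then obtain i0 where i0: "i0 \<in> S" "c = w $ i0 / x $ i0"
    by auto
  have "0 < w $ j / x $ j"
    using j(2) \<open>j \<in> S\<close> unfolding S_def by simp
  then have "0 < c"
    using c_ge[OF \<open>j \<in> S\<close>] by linarith
  moreover have "w $ i \<le> c * x $ i" if "i < n" for i
  proof (cases "x $ i = 0")
    case True
    then show ?thesis using support[OF that] by simp
  next
    case False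
    then have "i \<in> S"
      using x(2)[OF that] that unfolding S_def by simp
    then show ?thesis
      using c_ge[OF \<open>i \<in> S\<close>] unfolding S_def by (simp add: divide_le_eq mult.commute)
  qed
  moreover have "i0 < n" "0 < x $ i0" "w $ i0 = c * x $ i0"
    using i0 unfolding S_def by auto
  ultimately show thesis
    using that by blast
qed

text \<open>Compare a nonnegative subeigenvector \<open>w\<close> with the least multiple \<open>c \<cdot> x\<close> dominating it and
  evaluate at a row where the two touch.\<close>

lemma subeigenvalue_le_of_mult_vec_le:
  assumes B: "B \<in> carrier_mat n n" "nonneg_mat B"
    and x: "x \<in> carrier_vec n" "\<And>i. i < n \<Longrightarrow> 0 \<le> x $ i"
    and super: "\<And>i. i < n \<Longrightarrow> (B *\<^sub>v x) $ i \<le> r * x $ i"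
    and zero_rows: "\<And>i j. i < n \<Longrightarrow> j < n \<Longrightarrow> x $ i = 0 \<Longrightarrow> B $$ (i, j) = 0"
    and w: "w \<in> carrier_vec n" "w \<noteq> 0\<^sub>v n" "\<And>i. i < n \<Longrightarrow> 0 \<le> w $ i"
    and "0 < \<mu>" and sub: "\<And>i. i < n \<Longrightarrow> \<mu> * w $ i \<le> (B *\<^sub>v w) $ i"
  shows "\<mu> \<le> r"
proof -
  have "w $ i = 0" if "i < n" "x $ i = 0" for i
  proof -
    have "(B *\<^sub>v w) $ i = 0"
      using mult_mat_vec_index_sum[OF B(1) w(1) that(1)] zero_rows[OF that(1) _ that(2)] by simp
    then show ?thesis
      using sub[OF that(1)] w(3)[OF that(1)] \<open>0 < \<mu>\<close> by (simp add: mult_le_0_iff)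
  qed
  then obtain c i0 where c: "0 < c" "i0 < n" "0 < x $ i0" "w $ i0 = c * x $ i0"
    and w_le: "\<And>i. i < n \<Longrightarrow> w $ i \<le> c * x $ i"
    using ex_least_dominating_multiple[OF x w] by blast
  have "\<mu> * (c * x $ i0) \<le> (B *\<^sub>v w) $ i0"
    using sub[OF c(2)] c(4) by simp
  also have "\<dots> \<le> (B *\<^sub>v (c \<cdot>\<^sub>v x)) $ i0"
    using w_le x(1) w(1) by (intro nonneg_mat_mult_vec_mono[OF B]) (auto simp: c(2))
  also have "\<dots> = c * (B *\<^sub>v x) $ i0"
    using B(1) x(1) c(2) by (simp add: mult_mat_vec)
  also have "\<dots> \<le> r * (c * x $ i0)"
    using mult_left_mono[OF super[OF c(2)], of c] \<open>0 < c\<close> by (simp add: mult_ac)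
  finally show ?thesis
    using c(1,3) by (simp add: mult_le_cancel_right)
qed

text \<open>The zero-row hypothesis cannot be dropped: \<open>B = diag(0, 2)\<close> and \<open>x = (1, 0)\<close> satisfy
  \<open>B x \<le> 0 \<cdot> x\<close>.\<close>

lemma rho_le_of_mult_vec_le:
  assumes B: "B \<in> carrier_mat n n" "nonneg_mat B"
    and x: "x \<in> carrier_vec n" "x \<noteq> 0\<^sub>v n" "\<And>i. i < n \<Longrightarrow> 0 \<le> x $ i"
    and super: "\<And>i. i < n \<Longrightarrow> (B *\<^sub>v x) $ i \<le> r * x $ i"
    and zero_rows: "\<And>i j. i < n \<Longrightarrow> j < n \<Longrightarrow> x $ i = 0 \<Longrightarrow> B $$ (i, j) = 0"
  shows "rho B \<le> r"
proof -
  obtain j where j: "j < n" "0 < x $ j"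
    using obtain_nonzero_index[OF x(1,2)] x(3) by (metis order_le_neq_trans)
  obtain w where w: "w \<in> carrier_vec n" "w \<noteq> 0\<^sub>v n" "\<And>i. i < n \<Longrightarrow> 0 \<le> w $ i"
      "\<And>i. i < n \<Longrightarrow> rho B * w $ i \<le> (B *\<^sub>v w) $ i"
    using ex_rho_subeigenvector[OF B] j(1) by auto
  show ?thesis
  proof (cases "rho B = 0")
    case True
    have "0 \<le> (B *\<^sub>v x) $ j"
      unfolding mult_mat_vec_index_sum[OF B(1) x(1) j(1)]
      using B j(1) x(3) by (intro sum_nonneg mult_nonneg_nonneg) (auto simp: nonneg_mat_def)
    then have "0 \<le> r * x $ j"
      using super[OF j(1)] by linarith
    then have "0 \<le> r"
      using j(2) by (simp add: zero_le_mult_iff)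
    then show ?thesis using True by simp
  next
    case False
    then have "0 < rho B"
      using rho_nonneg[OF B(1)] j(1) by fastforce
    show ?thesis
      using B x(1,3) super zero_rows w(1-3) \<open>0 < rho B\<close> w(4) by (rule subeigenvalue_le_of_mult_vec_le)
  qed
qed

section \<open>Row-wise permutations\<close>

lemma Omega_finite: "finite (Omega n A)"
proof -
  define P where "P = Pi\<^sub>E {..<n} (\<lambda>_. Pi\<^sub>E {..<n} (\<lambda>_. {..<n}))"
  define row_perm where "row_perm = (\<lambda>F. mat n n (\<lambda>(i, j). A $$ (i, F i j)))"
  have "Omega n A \<subseteq> row_perm ` P"
  proof
    fix B assume B: "B \<in> Omega n A"
    then have "\<forall>i<n. \<exists>\<phi>. \<phi> permutes {..<n} \<and> (\<forall>j<n. B $$ (i, j) = A $$ (i, \<phi> j))"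
      unfolding Omega_def by auto
    then obtain \<Phi> where \<Phi>: "\<And>i. i < n \<Longrightarrow> \<Phi> i permutes {..<n} \<and> (\<forall>j<n. B $$ (i, j) = A $$ (i, \<Phi> i j))"
      by metis
    define F where "F = restrict (\<lambda>i. restrict (\<Phi> i) {..<n}) {..<n}"
    have "\<Phi> i j < n" if "i < n" "j < n" for i j
      using \<Phi>[OF that(1)] that(2) permutes_in_image by (metis lessThan_iff)
    then have "F \<in> P"
      unfolding P_def F_def by (auto simp: PiE_iff)
    moreover have "B = row_perm F"
      using B \<Phi> unfolding row_perm_def F_def Omega_def by (intro eq_matI) auto
    ultimately show "B \<in> row_perm ` P" by auto
  qed
  moreover have "finite P"
    unfolding P_def by (intro finite_PiE) auto
  ultimately show ?thesis
    using finite_surj by blast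
qed

lemma self_in_Omega: "A \<in> carrier_mat n n \<Longrightarrow> A \<in> Omega n A"
  unfolding Omega_def by (auto intro!: exI[of _ id] permutes_id)

lemma Omega_entry:
  assumes "B \<in> Omega n A" "i < n" "j < n"
  obtains k where "k < n" "B $$ (i, j) = A $$ (i, k)"
proof -
  obtain \<phi> where "\<phi> permutes {..<n}" "B $$ (i, j) = A $$ (i, \<phi> j)"
    using assms unfolding Omega_def by blast
  then show thesis
    using that[of "\<phi> j"] permutes_in_image assms(3) by fastforce
qed

lemma nonneg_mat_Omega:
  assumes "A \<in> carrier_mat n n" "nonneg_mat A" "B \<in> Omega n A"
  shows "nonneg_mat B"
  unfolding nonneg_mat_def
proof (intro allI impI)
  fix i j assume "i < dim_row B" "j < dim_col B"
  then have "i < n" "j < n"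
    using assms(3) unfolding Omega_def by auto
  then obtain k where "k < n" "B $$ (i, j) = A $$ (i, k)"
    using Omega_entry[OF assms(3)] by blast
  then show "0 \<le> B $$ (i, j)"
    using assms(1,2) \<open>i < n\<close> unfolding nonneg_mat_def by simp
qed

lemma Omega_mult_vec_index:
  assumes "B \<in> Omega n A" "x \<in> carrier_vec n" "i < n"
  obtains \<phi> where "\<phi> permutes {..<n}" "(B *\<^sub>v x) $ i = (\<Sum>j<n. A $$ (i, \<phi> j) * x $ j)"
proof -
  obtain \<phi> where \<phi>: "\<phi> permutes {..<n}" "\<forall>j<n. B $$ (i, j) = A $$ (i, \<phi> j)"
    using assms(1,3) unfolding Omega_def by auto
  have "(B *\<^sub>v x) $ i = (\<Sum>j<n. A $$ (i, \<phi> j) * x $ j)"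
    using mult_mat_vec_index_sum[OF _ assms(2,3), of B] assms(1) \<phi>(2) unfolding Omega_def by simp
  with \<phi>(1) show thesis by (rule that)
qed

lemma Omega_mult_vec_le:
  assumes "A \<in> carrier_mat n n" "B \<in> Omega n A" "x \<in> carrier_vec n" "i < n"
    and "\<And>j k. j < n \<Longrightarrow> k < n \<Longrightarrow> x $ k < x $ j \<Longrightarrow> A $$ (i, k) \<le> A $$ (i, j)"
  shows "(B *\<^sub>v x) $ i \<le> (A *\<^sub>v x) $ i"
proof -
  obtain \<phi> where \<phi>: "\<phi> permutes {..<n}" "(B *\<^sub>v x) $ i = (\<Sum>j<n. A $$ (i, \<phi> j) * x $ j)"
    using Omega_mult_vec_index[OF assms(2-4)] .
  have "(\<Sum>j<n. A $$ (i, \<phi> j) * x $ j) \<le> (\<Sum>j<n. A $$ (i, j) * x $ j)"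
    by (rule rearrangement_inequality[where f = "\<lambda>j. A $$ (i, j)" and g = "\<lambda>j. x $ j"])
      (use \<phi>(1) assms(5) in auto)
  then show ?thesis
    using \<phi>(2) mult_mat_vec_index_sum[OF assms(1,3,4)] by simp
qed

lemma Omega_mult_vec_ge:
  assumes "A \<in> carrier_mat n n" "B \<in> Omega n A" "x \<in> carrier_vec n" "i < n"
    and "\<And>j k. j < n \<Longrightarrow> k < n \<Longrightarrow> x $ k < x $ j \<Longrightarrow> A $$ (i, j) \<le> A $$ (i, k)"
  shows "(A *\<^sub>v x) $ i \<le> (B *\<^sub>v x) $ i"
proof -
  obtain \<phi> where \<phi>: "\<phi> permutes {..<n}" "(B *\<^sub>v x) $ i = (\<Sum>j<n. A $$ (i, \<phi> j) * x $ j)"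
    using Omega_mult_vec_index[OF assms(2-4)] .
  have "(\<Sum>j<n. A $$ (i, j) * x $ j) \<le> (\<Sum>j<n. A $$ (i, \<phi> j) * x $ j)"
    by (rule rearrangement_inequality_opposite[where f = "\<lambda>j. A $$ (i, j)" and g = "\<lambda>j. x $ j"])
      (use \<phi>(1) assms(5) in auto)
  then show ?thesis
    using \<phi>(2) mult_mat_vec_index_sum[OF assms(1,3,4)] by simp
qed

lemma perron_eigenvector_zero_row:
  assumes A: "A \<in> carrier_mat n n" "nonneg_mat A" and x: "perron_eigenvector n A x"
    and ord: "\<And>j k. j < n \<Longrightarrow> k < n \<Longrightarrow> x $ k < x $ j \<Longrightarrow> A $$ (i, k) \<le> A $$ (i, j)"
    and "i < n" "x $ i = 0" "k < n"
  shows "A $$ (i, k) = 0"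
proof -
  have x_carrier: "x \<in> carrier_vec n" and x_nonneg: "\<And>j. j < n \<Longrightarrow> 0 \<le> x $ j"
    using x unfolding perron_eigenvector_def by auto
  have "(\<Sum>j<n. A $$ (i, j) * x $ j) = rho A * x $ i"
    using x \<open>i < n\<close> mult_mat_vec_index_sum[OF A(1) x_carrier \<open>i < n\<close>]
    unfolding perron_eigenvector_def by (metis index_smult_vec(1) carrier_vecD)
  then have "\<forall>j\<in>{..<n}. A $$ (i, j) * x $ j = 0"
    using A \<open>i < n\<close> x_nonneg \<open>x $ i = 0\<close>
    by (subst sum_nonneg_eq_0_iff[symmetric]) (auto simp: nonneg_mat_def)
  then have support_zero: "A $$ (i, j) = 0" if "j < n" "0 < x $ j" for j
    using that by fastforce
  obtain j where j: "j < n" "0 < x $ j"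
    using obtain_nonzero_index[OF x_carrier] x x_nonneg unfolding perron_eigenvector_def
    by (metis order_le_neq_trans)
  show ?thesis
  proof (cases "0 < x $ k")
    case True
    then show ?thesis using support_zero \<open>k < n\<close> by simp
  next
    case False
    then have "A $$ (i, k) \<le> A $$ (i, j)"
      using ord[OF j(1) \<open>k < n\<close>] x_nonneg[OF \<open>k < n\<close>] j(2) by simp
    then show ?thesis
      using support_zero[OF j] A \<open>i < n\<close> \<open>k < n\<close> unfolding nonneg_mat_def by fastforce
  qed
qed

lemma rho_eq_Max_Omega:
  assumes A: "A \<in> carrier_mat n n" "nonneg_mat A" and x: "perron_eigenvector n A x"
    and ord: "\<forall>i<n. \<forall>j<n. \<forall>k<n. x $ k < x $ j \<longrightarrow> A $$ (i, k) \<le> A $$ (i, j)"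
  shows "rho A = Max (rho ` Omega n A)"
proof (rule Max_eqI[symmetric])
  have x_carrier: "x \<in> carrier_vec n"
    using x unfolding perron_eigenvector_def by simp
  show "y \<le> rho A" if y: "y \<in> rho ` Omega n A" for y
  proof -
    obtain B where B: "B \<in> Omega n A" "y = rho B"
      using y by blast
    have "rho B \<le> rho A"
    proof (rule rho_le_of_mult_vec_le[OF _ nonneg_mat_Omega[OF A B(1)]])
      show "B \<in> carrier_mat n n"
        using B(1) unfolding Omega_def by simp
      show "(B *\<^sub>v x) $ i \<le> rho A * x $ i" if "i < n" for i
        using Omega_mult_vec_le[OF A(1) B(1) x_carrier that] ord that x
        unfolding perron_eigenvector_def by auto
      show "B $$ (i, j) = 0" if "i < n" "j < n" "x $ i = 0" for i j
        using Omega_entry[OF B(1) that(1,2)] perron_eigenvector_zero_row[OF A x _ that(1,3)] ord that(1)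
        by metis
    qed (use x in \<open>auto simp: perron_eigenvector_def\<close>)
    then show ?thesis using B(2) by simp
  qed
qed (use Omega_finite self_in_Omega[OF A(1)] in auto)

lemma rho_eq_Min_Omega:
  assumes A: "A \<in> carrier_mat n n" "nonneg_mat A" and x: "perron_eigenvector n A x"
    and ord: "\<forall>i<n. \<forall>j<n. \<forall>k<n. x $ k < x $ j \<longrightarrow> A $$ (i, k) \<ge> A $$ (i, j)"
  shows "rho A = Min (rho ` Omega n A)"
proof (rule Min_eqI[symmetric])
  have x_carrier: "x \<in> carrier_vec n"
    using x unfolding perron_eigenvector_def by simp
  show "rho A \<le> y" if y: "y \<in> rho ` Omega n A" for y
  proof -
    obtain B where B: "B \<in> Omega n A" "y = rho B"
      using y by blast
    have "rho A \<le> rho B"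
    proof (rule le_rho_of_le_mult_vec[OF _ nonneg_mat_Omega[OF A B(1)]])
      show "B \<in> carrier_mat n n"
        using B(1) unfolding Omega_def by simp
      show "rho A * x $ i \<le> (B *\<^sub>v x) $ i" if "i < n" for i
        using Omega_mult_vec_ge[OF A(1) B(1) x_carrier that] ord that x
        unfolding perron_eigenvector_def by auto
    qed (use x in \<open>auto simp: perron_eigenvector_def\<close>)
    then show ?thesis using B(2) by simp
  qed
qed (use Omega_finite self_in_Omega[OF A(1)] in auto)

theorem theorem3p3:
  fixes n :: nat and A :: "real mat" and x :: "real vec"
  assumes "A \<in> carrier_mat n n" and "nonneg_mat A"
    and "perron_eigenvector n A x"
  shows "((\<forall>i<n. \<forall>j<n. \<forall>k<n. x $ k < x $ j \<longrightarrow> A $$ (i,k) \<le> A $$ (i,j))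
           \<longrightarrow> rho A = Max (rho ` Omega n A))
     \<and> ((\<forall>i<n. \<forall>j<n. \<forall>k<n. x $ k < x $ j \<longrightarrow> A $$ (i,k) \<ge> A $$ (i,j))
           \<longrightarrow> rho A = Min (rho ` Omega n A))"
  using rho_eq_Max_Omega[OF assms] rho_eq_Min_Omega[OF assms] by blast

end
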